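(* Let $T>0$, $H_T=(0,T)\times(0,\infty)$, let $\tilde U\in C([0,T])$ with $\tilde U\le0$, and let $w_0\ge0$ be continuous on $[0,\infty)$. Let $w$ be a classical solution (continuous on $\overline{H_T}$, $C^1$ in $t$ and $C^2$ in $y$ in $H_T$) of $$\partial_tw-w^2+\partial_y^{-1}(w+\tilde U)\,\partial_yw-2\tilde Uw+\int_{+\infty}^yw\,dy'-\partial_y^2w=0\ \text{ in }H_T,$$ $$w|_{t=0}=w_0,\qquad w|_{y=0}=-\tilde U(t),\qquad \lim_{y\to+\infty}w=0,$$ such that $\sup_{H_T}|w(t,y)|e^{y}<\infty$ and $w(t,y)e^{y}\to0$ as $y\to+\infty$ uniformly in $t\in[0,T]$. Then $w\ge0$ in $H_T$.
   Context: $\partial_y^{-1}f(t,y):=\int_0^yf(t,y')dy'$. (In the paper $w=\tilde u-\tilde U$ with $\tilde u(t,y)=-\partial_xu(t,0,y)$, $\tilde U(t)=-\partial_xU(t,0)$ for a solution $u$ of the geophysical boundary layer problem.) *)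

theory Defs
  imports "HOL-Analysis.Analysis"
begin

end

theory Submission
  imports Defs
begin

text \<open>If w were negative somewhere, \<open>\<phi> = exp (-\<lambda>t) exp (y/2) w\<close> would
  attain a negative minimum over \<open>[0,t\<^sub>1] \<times> [0,\<infinity>)\<close>: the uniform decay of
  \<open>w e\<^sup>y\<close> makes \<open>\<phi>\<close> tend to 0 as \<open>y \<rightarrow> \<infinity>\<close>, and the sign of the initial
  and boundary data puts the minimum in the interior. There minimality gives
  \<open>\<partial>\<^sub>tw \<le> \<lambda>w\<close>, \<open>\<partial>\<^sub>yw = -w/2\<close>, \<open>\<partial>\<^sub>y\<^sup>2w \<ge> w/4\<close> and, for the nonlocal term,
  \<open>\<integral>\<^sub>y\<^sup>\<infinity> w \<ge> w(y) e\<^sup>y\<^sup>/\<^sup>2 \<integral>\<^sub>y\<^sup>\<infinity> e\<^sup>-\<^sup>s\<^sup>/\<^sup>2 ds = 2w\<close>, while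
  \<open>|w| \<le> M e\<^sup>-\<^sup>y\<close> gives \<open>\<integral>\<^sub>0\<^sup>y w \<le> M\<close>. Inserted into the equation, and
  using \<open>U \<le> 0\<close> and \<open>w < 0\<close>, this makes its left-hand side at most
  \<open>(\<lambda> - M/2 - 9/4) w < 0\<close> as soon as \<open>\<lambda> > M/2 + 9/4\<close>.\<close>

definition weighted :: "real \<Rightarrow> (real \<Rightarrow> real \<Rightarrow> real) \<Rightarrow> real \<Rightarrow> real \<Rightarrow> real" where
  "weighted lam w t y = exp (- lam * t) * exp (y / 2) * w t y"

lemma weighted_neg_iff: "weighted lam w t y < 0 \<longleftrightarrow> w t y < 0"
  using mult_less_cancel_left_pos[of "exp (- lam * t) * exp (y / 2)" "w t y" 0]
  by (simp add: weighted_def)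

lemma deriv_nonpos_at_left_min:
  fixes f :: "real \<Rightarrow> real"
  assumes "(f has_real_derivative D) (at t)" "a < t" "\<And>s. a \<le> s \<Longrightarrow> s \<le> t \<Longrightarrow> f t \<le> f s"
  shows "D \<le> 0"
proof (rule ccontr)
  assume "\<not> D \<le> 0"
  then obtain d where d: "d > 0" "\<And>k. 0 < k \<Longrightarrow> k < d \<Longrightarrow> f (t - k) < f t"
    using DERIV_pos_inc_left[OF assms(1)] by force
  define k where "k = min (d / 2) (t - a)"
  have "0 < k" "k < d" "a \<le> t - k" using d assms(2) by (auto simp: k_def)
  then show False using d(2) assms(3)[of "t - k"] by force
qed

lemma deriv_le_at_weighted_left_min:
  fixes f :: "real \<Rightarrow> real"
  assumes D: "(f has_real_derivative D) (at t)" and "a < t"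
    and min: "\<And>s. a \<le> s \<Longrightarrow> s \<le> t \<Longrightarrow> exp (- lam * t) * f t \<le> exp (- lam * s) * f s"
  shows "D \<le> lam * f t"
proof -
  have "((\<lambda>s. exp (- lam * s) * f s) has_real_derivative
          exp (- lam * t) * (D - lam * f t)) (at t)"
    by (rule derivative_eq_intros D refl)+ (simp add: algebra_simps)
  then have "exp (- lam * t) * (D - lam * f t) \<le> 0"
    using deriv_nonpos_at_left_min \<open>a < t\<close> min by blast
  then show ?thesis by (simp add: mult_le_0_iff)
qed

lemma deriv2_nonneg_at_min:
  fixes f f' :: "real \<Rightarrow> real"
  assumes "a < x"
    and f': "\<And>s. a < s \<Longrightarrow> (f has_real_derivative f' s) (at s)"
    and f'': "(f' has_real_derivative D) (at x)"
    and min: "\<And>s. a < s \<Longrightarrow> f x \<le> f s"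
  shows "f' x = 0" "0 \<le> D"
proof -
  show "f' x = 0"
    by (rule DERIV_local_min[OF f'[OF \<open>a < x\<close>], of "x - a"]) (use assms in \<open>auto simp: dist_real_def\<close>)
  show "0 \<le> D"
  proof (rule ccontr)
    assume "\<not> 0 \<le> D"
    then obtain d where d: "d > 0" "\<And>k. 0 < k \<Longrightarrow> k < d \<Longrightarrow> f' (x + k) < f' x"
      using DERIV_neg_dec_right[OF f''] by force
    obtain z where z: "x < z" "z < x + d / 2" "f (x + d / 2) - f x = d / 2 * f' z"
      using MVT2[of x "x + d / 2" f f'] d(1) f' \<open>a < x\<close> by force
    \<comment> \<open>f' decreases right of x from its value 0, so f decreases there\<close>
    have "f' z < 0" using d(2)[of "z - x"] z \<open>f' x = 0\<close> by auto
    then have "d / 2 * f' z < 0" using d(1) by (simp add: mult_pos_neg)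
    then have "f (x + d / 2) < f x" using z(3) by linarith
    then show False using min[of "x + d / 2"] d(1) \<open>a < x\<close> by auto
  qed
qed

lemma derivs_at_weighted_min:
  fixes f f' :: "real \<Rightarrow> real"
  assumes "a < y"
    and f': "\<And>s. a < s \<Longrightarrow> (f has_real_derivative f' s) (at s)"
    and f'': "(f' has_real_derivative D) (at y)"
    and min: "\<And>s. a < s \<Longrightarrow> exp (y / 2) * f y \<le> exp (s / 2) * f s"
  shows "f' y = - f y / 2" "f y / 4 \<le> D"
proof -
  let ?g = "\<lambda>s. exp (s / 2) * f s"
  let ?g' = "\<lambda>s. exp (s / 2) * (f' s + f s / 2)"
  have e: "((\<lambda>s. exp (s / 2)) has_real_derivative exp (s / 2) / 2) (at s)" for s
    by (auto intro!: derivative_eq_intros)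
  have g': "(?g has_real_derivative ?g' s) (at s)" if "a < s" for s
    by (rule DERIV_cong[OF DERIV_mult[OF e f'[OF that]]]) (simp add: algebra_simps)
  have g'': "(?g' has_real_derivative exp (y / 2) * (D + f' y + f y / 4)) (at y)"
    by (rule DERIV_cong[OF DERIV_mult[OF e DERIV_add[OF f'' DERIV_cdivide[OF f'[OF \<open>a < y\<close>]]]]])
       (simp add: field_simps)
  have "?g' y = 0" "0 \<le> exp (y / 2) * (D + f' y + f y / 4)"
    using deriv2_nonneg_at_min[OF \<open>a < y\<close> g' g''] min by auto
  then show "f' y = - f y / 2" "f y / 4 \<le> D"
    by (auto simp: zero_le_mult_iff)
qed

lemma integrable_on_atLeast_exp_bound:
  fixes f :: "real \<Rightarrow> real"
  assumes "continuous_on {a..} f" "\<And>s. a \<le> s \<Longrightarrow> \<bar>f s\<bar> \<le> C * exp (- s)"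
  shows "f integrable_on {a..}"
proof (rule measurable_bounded_by_integrable_imp_integrable[of f "{a..}" "\<lambda>s. C * exp (-1 * s)"])
  show "f \<in> borel_measurable (lebesgue_on {a..})"
    by (rule continuous_imp_measurable_on_sets_lebesgue[OF assms(1)]) auto
  show "(\<lambda>s. C * exp (-1 * s)) integrable_on {a..}"
    using has_integral_mult_right[OF has_integral_exp_minus_to_infinity[of 1 a], of C]
    unfolding integrable_on_def by auto
qed (use assms(2) in auto)

lemma integral_atLeast_ge_of_weighted_lower_bound:
  fixes f :: "real \<Rightarrow> real"
  assumes "f integrable_on {y..}" "\<And>s. y \<le> s \<Longrightarrow> exp (y / 2) * c \<le> exp (s / 2) * f s"
  shows "2 * c \<le> integral {y..} f"
proof -
  let ?g = "\<lambda>s. c * exp (y / 2) * exp (- (1/2) * s)"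
  have "(?g has_integral c * exp (y / 2) * (exp (- (1/2) * y) / (1/2))) {y..}"
    by (rule has_integral_mult_right has_integral_exp_minus_to_infinity)+ simp
  moreover have "c * exp (y / 2) * (exp (- (1/2) * y) / (1/2)) = 2 * c"
    by (simp add: exp_minus field_simps)
  ultimately have g: "(?g has_integral 2 * c) {y..}" by metis
  have "?g s \<le> f s" if "s \<in> {y..}" for s
    using assms(2)[of s] that by (simp add: exp_minus field_simps)
  then show ?thesis
    using has_integral_le[OF g integrable_integral[OF assms(1)]] by blast
qed

lemma integral_le_of_exp_bound:
  fixes f :: "real \<Rightarrow> real"
  assumes "continuous_on {0..y} f" "0 \<le> y" "0 \<le> M"
    and bound: "\<And>s. 0 < s \<Longrightarrow> s \<le> y \<Longrightarrow> f s \<le> M * exp (- s)"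
  shows "integral {0..y} f \<le> M"
proof -
  have "((\<lambda>s. M * exp (- s)) has_integral (- M * exp (- y)) - (- M * exp (- 0))) {0..y}"
    using \<open>0 \<le> y\<close> by (intro fundamental_theorem_of_calculus)
      (auto intro!: derivative_eq_intros simp flip: has_real_derivative_iff_has_vector_derivative)
  then have E: "((\<lambda>s. M * exp (- s)) has_integral (M - M * exp (- y))) {0..y}" by simp
  \<comment> \<open>the bound is only assumed away from 0, so integrate its minimum with f instead\<close>
  let ?g = "\<lambda>s. min (f s) (M * exp (- s))"
  have "integral {0..y} f = integral {0..y} ?g"
    by (rule integral_spike[of "{0}"]) (use bound in auto)
  also have "\<dots> \<le> integral {0..y} (\<lambda>s. M * exp (- s))"
    by (rule integral_le) (use E assms(1) in \<open>auto intro!: integrable_continuous_interval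
        continuous_intros simp: integrable_on_def\<close>)
  also have "\<dots> = M - M * exp (- y)" using E by (rule integral_unique)
  also have "\<dots> \<le> M" using \<open>0 \<le> M\<close> by simp
  finally show ?thesis .
qed

lemma residual_neg_at_negative_min:
  fixes W u y B I Wt Wy Wyy M lam :: real
  assumes "W < 0" "u \<le> 0" "0 < y" "B \<le> M" "2 * W \<le> I" "Wt \<le> lam * W" "M / 2 + 9 / 4 < lam"
    "Wy = - W / 2" "W / 4 \<le> Wyy"
  shows "Wt - W\<^sup>2 + (B + y * u) * Wy - 2 * u * W - I - Wyy < 0"
proof -
  have "M * W \<le> B * W" "0 \<le> u * W" "lam * W < (M / 2 + 9 / 4) * W"
    using assms by (auto intro: mult_right_mono_neg mult_nonpos_nonpos mult_strict_right_mono_neg)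
  moreover have "(M / 2 + 9 / 4) * W = M * W / 2 + 9 / 4 * W" by (simp add: algebra_simps)
  moreover have "0 \<le> y * (u * W)" using \<open>0 \<le> u * W\<close> \<open>0 < y\<close> by simp
  moreover have "0 \<le> W\<^sup>2" by simp
  moreover have "Wt - W\<^sup>2 + (B + y * u) * Wy - 2 * u * W - I - Wyy
      = Wt - W\<^sup>2 - B * W / 2 - y * (u * W) / 2 - 2 * (u * W) - I - Wyy"
    using \<open>Wy = - W / 2\<close> by (simp add: algebra_simps)
  ultimately show ?thesis using assms by linarith
qed

lemma continuous_attains_inf_on_half_strip:
  fixes f :: "real \<times> real \<Rightarrow> real"
  assumes cont: "continuous_on ({a..b} \<times> {c..}) f" and p: "p \<in> {a..b} \<times> {c..}"
    and far: "\<And>t y. t \<in> {a..b} \<Longrightarrow> Y \<le> y \<Longrightarrow> f p \<le> f (t, y)"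
  obtains q where "q \<in> {a..b} \<times> {c..}" "\<And>r. r \<in> {a..b} \<times> {c..} \<Longrightarrow> f q \<le> f r"
proof -
  define S where "S = {a..b} \<times> {c..max Y (snd p)}"
  have "compact S" "S \<noteq> {}" "continuous_on S f"
    using p by (auto simp: S_def intro!: compact_Times continuous_on_subset[OF cont])
  then obtain q where q: "q \<in> S" "\<And>r. r \<in> S \<Longrightarrow> f q \<le> f r"
    using continuous_attains_inf by metis
  have "f q \<le> f p" using q(2)[of p] p by (auto simp: S_def)
  have "f q \<le> f r" if r: "r \<in> {a..b} \<times> {c..}" for r
  proof (cases "snd r \<le> max Y (snd p)")
    case True
    then show ?thesis using q(2)[of r] r by (auto simp: S_def mem_Times_iff)
  next
    case False
    then have "Y \<le> snd r" by (simp add: max_def split: if_splits)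
    then show ?thesis using far[of "fst r" "snd r"] r \<open>f q \<le> f p\<close> by (auto simp: mem_Times_iff)
  qed
  moreover have "q \<in> {a..b} \<times> {c..}" using q(1) by (auto simp: S_def)
  ultimately show ?thesis using that by blast
qed

lemma weighted_attains_min:
  fixes w :: "real \<Rightarrow> real \<Rightarrow> real"
  assumes cont: "continuous_on ({0..T} \<times> {0..}) (\<lambda>(t, y). w t y)"
    and decay: "\<forall>\<epsilon>>0. \<exists>Y. \<forall>t\<in>{0..T}. \<forall>y\<ge>Y. \<bar>w t y\<bar> * exp y \<le> \<epsilon>"
    and "0 \<le> lam" "0 \<le> t1" "t1 \<le> T" "0 \<le> y1" and neg: "weighted lam w t1 y1 < 0"
  obtains t0 y0 where "0 \<le> t0" "t0 \<le> t1" "0 \<le> y0"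
    "\<And>t y. 0 \<le> t \<Longrightarrow> t \<le> t1 \<Longrightarrow> 0 \<le> y \<Longrightarrow> weighted lam w t0 y0 \<le> weighted lam w t y"
proof -
  let ?phi = "\<lambda>p. weighted lam w (fst p) (snd p)"
  have "continuous_on ({0..t1} \<times> {0..}) (\<lambda>p. w (fst p) (snd p))"
    using \<open>t1 \<le> T\<close> by (intro continuous_on_subset[OF cont[unfolded case_prod_beta]]) auto
  then have phi_cont: "continuous_on ({0..t1} \<times> {0..}) ?phi"
    unfolding weighted_def by (intro continuous_intros) auto
  obtain Y where Y: "\<forall>t\<in>{0..T}. \<forall>y\<ge>Y. \<bar>w t y\<bar> * exp y \<le> - ?phi (t1, y1)"
    using decay[rule_format, of "- ?phi (t1, y1)"] neg by auto
  \<comment> \<open>for \<open>t, y \<ge> 0\<close> both weights are dominated by \<open>e\<^sup>y\<close>\<close>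
  have far: "?phi (t1, y1) \<le> ?phi (t, y)" if "t \<in> {0..t1}" "max Y 0 \<le> y" for t y
  proof -
    have "exp (- lam * t) * exp (y / 2) \<le> 1 * exp y"
      using that \<open>0 \<le> lam\<close> by (intro mult_mono) auto
    then have "\<bar>?phi (t, y)\<bar> \<le> exp y * \<bar>w t y\<bar>"
      using mult_right_mono[of _ _ "\<bar>w t y\<bar>"] by (simp add: weighted_def abs_mult)
    also have "\<dots> \<le> - ?phi (t1, y1)" using Y that \<open>t1 \<le> T\<close> by (simp add: mult.commute)
    finally show ?thesis by linarith
  qed
  obtain q where "q \<in> {0..t1} \<times> {0..}" "\<And>r. r \<in> {0..t1} \<times> {0..} \<Longrightarrow> ?phi q \<le> ?phi r"
    using continuous_attains_inf_on_half_strip[OF phi_cont, of "(t1, y1)" "max Y 0"] far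
      \<open>0 \<le> t1\<close> \<open>0 \<le> y1\<close> by auto
  then show ?thesis using that[of "fst q" "snd q"] by (auto simp: mem_Times_iff)
qed

lemma weighted_min_nonneg:
  fixes w :: "real \<Rightarrow> real \<Rightarrow> real" and w' :: "real \<Rightarrow> real"
  assumes t0: "0 < t0" and y0: "0 < y0" and "0 \<le> M" and lam: "M / 2 + 9 / 4 < lam" and "u \<le> 0"
    and bound: "\<And>y. 0 < y \<Longrightarrow> \<bar>w t0 y\<bar> \<le> M * exp (- y)"
    and cont: "continuous_on {0..} (w t0)"
    and Wt: "((\<lambda>s. w s y0) has_real_derivative Wt) (at t0)"
    and w': "\<And>y. 0 < y \<Longrightarrow> (w t0 has_real_derivative w' y) (at y)"
    and Wyy: "(w' has_real_derivative Wyy) (at y0)"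
    and eqn: "Wt - (w t0 y0)\<^sup>2 + integral {0..y0} (\<lambda>s. w t0 s + u) * w' y0 - 2 * u * w t0 y0
               - integral {y0..} (w t0) - Wyy = 0"
    and min: "\<And>t y. 0 \<le> t \<Longrightarrow> t \<le> t0 \<Longrightarrow> 0 \<le> y \<Longrightarrow> weighted lam w t0 y0 \<le> weighted lam w t y"
  shows "0 \<le> w t0 y0"
proof (rule ccontr)
  assume "\<not> 0 \<le> w t0 y0"
  have "Wt \<le> lam * w t0 y0"
    using deriv_le_at_weighted_left_min[OF Wt t0, of lam] min[of _ y0] y0
    by (auto simp: weighted_def mult_ac)
  moreover have "w' y0 = - w t0 y0 / 2" "w t0 y0 / 4 \<le> Wyy"
    using derivs_at_weighted_min[OF y0 w' Wyy] min[of t0] t0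
    by (auto simp: weighted_def mult_ac)
  moreover have "2 * w t0 y0 \<le> integral {y0..} (w t0)"
  proof (rule integral_atLeast_ge_of_weighted_lower_bound)
    show "w t0 integrable_on {y0..}"
      by (rule integrable_on_atLeast_exp_bound[where C = M])
         (use y0 bound in \<open>auto intro: continuous_on_subset[OF cont]\<close>)
  qed (use min[of t0] y0 t0 in \<open>auto simp: weighted_def mult_ac\<close>)
  moreover have "integral {0..y0} (w t0) \<le> M"
    by (rule integral_le_of_exp_bound)
       (use y0 \<open>0 \<le> M\<close> bound in \<open>auto intro: continuous_on_subset[OF cont] abs_le_D1\<close>)
  moreover have "integral {0..y0} (\<lambda>s. w t0 s + u) = integral {0..y0} (w t0) + y0 * u"
    using y0 by (subst integral_add)
       (auto intro!: integrable_continuous_interval continuous_on_subset[OF cont])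
  ultimately show False
    using residual_neg_at_negative_min[of "w t0 y0" u y0 "integral {0..y0} (w t0)" M
        "integral {y0..} (w t0)" Wt lam "w' y0" Wyy] eqn \<open>\<not> 0 \<le> w t0 y0\<close> y0 lam \<open>u \<le> 0\<close> by simp
qed

theorem lemma3p2:
  fixes T :: real and U w0 :: "real \<Rightarrow> real"
    and w wt wy wyy :: "real \<Rightarrow> real \<Rightarrow> real"
  assumes T_pos: "T > 0"
    and U_cont: "continuous_on {0..T} U"
    and U_nonpos: "\<forall>t\<in>{0..T}. U t \<le> 0"
    and w0_cont: "continuous_on {0..} w0"
    and w0_nonneg: "\<forall>y\<ge>0. w0 y \<ge> 0"
    and w_cont: "continuous_on ({0..T} \<times> {0..}) (\<lambda>(t, y). w t y)"
    and wt_deriv: "\<forall>t\<in>{0<..<T}. \<forall>y>0. ((\<lambda>s. w s y) has_real_derivative wt t y) (at t)"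
    and wy_deriv: "\<forall>t\<in>{0<..<T}. \<forall>y>0. ((\<lambda>s. w t s) has_real_derivative wy t y) (at y)"
    and wyy_deriv: "\<forall>t\<in>{0<..<T}. \<forall>y>0. ((\<lambda>s. wy t s) has_real_derivative wyy t y) (at y)"
    and wt_cont: "continuous_on ({0<..<T} \<times> {0<..}) (\<lambda>(t, y). wt t y)"
    and wy_cont: "continuous_on ({0<..<T} \<times> {0<..}) (\<lambda>(t, y). wy t y)"
    and wyy_cont: "continuous_on ({0<..<T} \<times> {0<..}) (\<lambda>(t, y). wyy t y)"
    and eqn: "\<forall>t\<in>{0<..<T}. \<forall>y>0.
       wt t y - (w t y)\<^sup>2 + integral {0..y} (\<lambda>s. w t s + U t) * wy t y
       - 2 * U t * w t y - integral {y..} (\<lambda>s. w t s) - wyy t y = 0"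
    and init: "\<forall>y\<ge>0. w 0 y = w0 y"
    and bdry: "\<forall>t\<in>{0..T}. w t 0 = - U t"
    and lim_inf: "\<forall>t\<in>{0..T}. ((\<lambda>y. w t y) \<longlongrightarrow> 0) at_top"
    and bound: "\<exists>M. \<forall>t\<in>{0<..<T}. \<forall>y>0. \<bar>w t y\<bar> * exp y \<le> M"
    and unif_decay: "\<forall>\<epsilon>>0. \<exists>Y. \<forall>t\<in>{0..T}. \<forall>y\<ge>Y. \<bar>w t y\<bar> * exp y \<le> \<epsilon>"
  shows "\<forall>t\<in>{0<..<T}. \<forall>y>0. w t y \<ge> 0"
proof (intro ballI allI impI)
  fix t1 y1 :: real
  assume t1: "t1 \<in> {0<..<T}" and y1: "0 < y1"
  obtain M0 where M0: "\<forall>t\<in>{0<..<T}. \<forall>y>0. \<bar>w t y\<bar> * exp y \<le> M0" using bound by blast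
  define M where "M = max M0 0"
  have M: "\<bar>w t y\<bar> \<le> M * exp (- y)" if "t \<in> {0<..<T}" "0 < y" for t y
  proof -
    have "\<bar>w t y\<bar> * exp y \<le> M" using M0 that unfolding M_def by (meson max.coboundedI1)
    then show ?thesis by (simp add: exp_minus field_simps)
  qed
  define lam where "lam = M / 2 + 3"
  show "0 \<le> w t1 y1"
  proof (rule ccontr)
    assume "\<not> 0 \<le> w t1 y1"
    then have neg1: "weighted lam w t1 y1 < 0" by (simp add: weighted_neg_iff)
    have "0 \<le> lam" "0 \<le> t1" "t1 \<le> T" "0 \<le> y1" using t1 y1 by (auto simp: lam_def M_def)
    then obtain t0 y0 where t0: "0 \<le> t0" "t0 \<le> t1" and "0 \<le> y0"
      and min: "\<And>t y. 0 \<le> t \<Longrightarrow> t \<le> t1 \<Longrightarrow> 0 \<le> y \<Longrightarrow> weighted lam w t0 y0 \<le> weighted lam w t y"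
      using weighted_attains_min[OF w_cont unif_decay _ _ _ _ neg1] by blast
    have "weighted lam w t0 y0 \<le> weighted lam w t1 y1" using t1 y1 by (intro min) auto
    with neg1 have "weighted lam w t0 y0 < 0" by linarith
    then have neg: "w t0 y0 < 0" by (simp add: weighted_neg_iff)
    have "0 \<le> w 0 y0" "0 \<le> w t0 0" using init w0_nonneg bdry U_nonpos t0 t1 \<open>0 \<le> y0\<close> by auto
    then have "t0 \<noteq> 0" "y0 \<noteq> 0" using neg by auto
    then have t0T: "t0 \<in> {0<..<T}" and y0: "0 < y0" using t0 t1 \<open>0 \<le> y0\<close> by auto
    have "continuous_on {0..} (\<lambda>y. w (fst (t0, y)) (snd (t0, y)))"
      using t0T by (intro continuous_on_compose2[OF w_cont[unfolded case_prod_beta]] continuous_intros) auto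
    then have cont: "continuous_on {0..} (w t0)" by simp
    have "0 \<le> M" "M / 2 + 9 / 4 < lam" "U t0 \<le> 0" using U_nonpos t0T by (auto simp: M_def lam_def)
    moreover have min_t0: "\<And>t y. 0 \<le> t \<Longrightarrow> t \<le> t0 \<Longrightarrow> 0 \<le> y \<Longrightarrow>
        weighted lam w t0 y0 \<le> weighted lam w t y"
      using min \<open>t0 \<le> t1\<close> by simp
    ultimately have "0 \<le> w t0 y0"
      using t0T by (intro weighted_min_nonneg[OF _ y0 _ _ _ M[OF t0T] cont wt_deriv[rule_format, OF t0T y0]
          wy_deriv[rule_format, OF t0T] wyy_deriv[rule_format, OF t0T y0] eqn[rule_format, OF t0T y0]
          min_t0]) auto
    with neg show False by simp
  qed
qed

end
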